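(* Let $L\colon \widehat{\Delta}\to\widehat{\Box}$ be the functor given by $L(X)([1]^n) = \int^{[m]\in\Delta} X_m \times \mathbf{Poset}([1]^n,[m])$. Equivalently, $L$ is the colimit-preserving functor with $L(y[m]) = \mathbf{Poset}(-,[m])|_{\Box}$; it is the leftmost adjoint in the essential geometric embedding $\widehat{\Delta}\to\widehat{\Box}$. Then $L$ preserves monomorphisms.
   Context: $\Delta$ is the simplex category, the full subcategory of $\mathbf{Poset}$ on $[m]=\{0<\dots<m\}$, $m\ge0$. $\Box$ is the full subcategory of $\mathbf{Poset}$ on $[1]^n$, $n \ge 0$. $\widehat{\mathcal{C}}$ denotes presheaves of sets on $\mathcal{C}$ and $y$ is the Yoneda embedding. The functor $L$ is left adjoint to the functor $T\colon\widehat{\Box}\to\widehat{\Delta}$, $T(Y)=\int^{n} Y([1]^n)\times N([1]^n)$, where $N$ denotes the nerve; on representables $T(y[1]^n)=(\Delta^1)^n$. *)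

theory Defs
  imports Main
begin

text \<open>The object [m] has elements {0..m}. A morphism [k] -> [m] is a monotone map,
 represented canonically by a function nat => nat that is 0 outside {0..k}.\<close>

definition dhom :: "nat \<Rightarrow> nat \<Rightarrow> (nat \<Rightarrow> nat) set" where
  "dhom k m = {f. (\<forall>i\<le>k. f i \<le> m) \<and> (\<forall>i j. i \<le> j \<longrightarrow> j \<le> k \<longrightarrow> f i \<le> f j)
                  \<and> (\<forall>i. k < i \<longrightarrow> f i = 0)}"

definition did :: "nat \<Rightarrow> nat \<Rightarrow> nat" where
  "did m = (\<lambda>i. if i \<le> m then i else 0)"

definition dcomp :: "nat \<Rightarrow> (nat \<Rightarrow> nat) \<Rightarrow> (nat \<Rightarrow> nat) \<Rightarrow> nat \<Rightarrow> nat" where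
  "dcomp k g f = (\<lambda>i. if i \<le> k then g (f i) else 0)"

definition sset :: "(nat \<Rightarrow> 'a set) \<Rightarrow> (nat \<Rightarrow> nat \<Rightarrow> (nat \<Rightarrow> nat) \<Rightarrow> 'a \<Rightarrow> 'a) \<Rightarrow> bool" where
  "sset X act \<longleftrightarrow>
     (\<forall>m k f x. f \<in> dhom k m \<longrightarrow> x \<in> X m \<longrightarrow> act m k f x \<in> X k) \<and>
     (\<forall>m x. x \<in> X m \<longrightarrow> act m m (did m) x = x) \<and>
     (\<forall>m k j f g x. f \<in> dhom k m \<longrightarrow> g \<in> dhom j k \<longrightarrow> x \<in> X m \<longrightarrow>
        act k j g (act m k f x) = act m j (dcomp j f g) x)"

definition sset_hom ::
  "(nat \<Rightarrow> 'a set) \<Rightarrow> (nat \<Rightarrow> nat \<Rightarrow> (nat \<Rightarrow> nat) \<Rightarrow> 'a \<Rightarrow> 'a) \<Rightarrow>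
   (nat \<Rightarrow> 'b set) \<Rightarrow> (nat \<Rightarrow> nat \<Rightarrow> (nat \<Rightarrow> nat) \<Rightarrow> 'b \<Rightarrow> 'b) \<Rightarrow>
   (nat \<Rightarrow> 'a \<Rightarrow> 'b) \<Rightarrow> bool" where
  "sset_hom X actX Y actY h \<longleftrightarrow>
     (\<forall>m x. x \<in> X m \<longrightarrow> h m x \<in> Y m) \<and>
     (\<forall>m k f x. f \<in> dhom k m \<longrightarrow> x \<in> X m \<longrightarrow> h k (actX m k f x) = actY m k f (h m x))"

definition sset_mono ::
  "(nat \<Rightarrow> 'a set) \<Rightarrow> (nat \<Rightarrow> nat \<Rightarrow> (nat \<Rightarrow> nat) \<Rightarrow> 'a \<Rightarrow> 'a) \<Rightarrow>
   (nat \<Rightarrow> 'b set) \<Rightarrow> (nat \<Rightarrow> nat \<Rightarrow> (nat \<Rightarrow> nat) \<Rightarrow> 'b \<Rightarrow> 'b) \<Rightarrow>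
   (nat \<Rightarrow> 'a \<Rightarrow> 'b) \<Rightarrow> bool" where
  "sset_mono X actX Y actY h \<longleftrightarrow> sset_hom X actX Y actY h \<and> (\<forall>m. inj_on (h m) (X m))"

text \<open>[1]^n has elements the boolean lists of length n, ordered componentwise.
  A poset map [1]^n -> [m] is a monotone map, represented canonically by a
  function that is 0 off the lists of length n.\<close>

definition cube :: "nat \<Rightarrow> bool list set" where
  "cube n = {xs. length xs = n}"

definition cube_le :: "bool list \<Rightarrow> bool list \<Rightarrow> bool" where
  "cube_le xs ys \<longleftrightarrow> list_all2 (\<le>) xs ys"

definition chom :: "nat \<Rightarrow> nat \<Rightarrow> (bool list \<Rightarrow> nat) set" where
  "chom n m = {f. (\<forall>xs \<in> cube n. f xs \<le> m) \<and>
                  (\<forall>xs \<in> cube n. \<forall>ys \<in> cube n. cube_le xs ys \<longrightarrow> f xs \<le> f ys) \<and>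
                  (\<forall>xs. xs \<notin> cube n \<longrightarrow> f xs = 0)}"

definition cdcomp :: "nat \<Rightarrow> (nat \<Rightarrow> nat) \<Rightarrow> (bool list \<Rightarrow> nat) \<Rightarrow> bool list \<Rightarrow> nat" where
  "cdcomp n g f = (\<lambda>xs. if xs \<in> cube n then g (f xs) else 0)"

definition coend_carrier ::
  "(nat \<Rightarrow> 'a set) \<Rightarrow> nat \<Rightarrow> (nat \<times> 'a \<times> (bool list \<Rightarrow> nat)) set" where
  "coend_carrier X n = {(m, x, f). x \<in> X m \<and> f \<in> chom n m}"

definition coend_gen ::
  "(nat \<Rightarrow> 'a set) \<Rightarrow> (nat \<Rightarrow> nat \<Rightarrow> (nat \<Rightarrow> nat) \<Rightarrow> 'a \<Rightarrow> 'a) \<Rightarrow> nat \<Rightarrow>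
   ((nat \<times> 'a \<times> (bool list \<Rightarrow> nat)) \<times> (nat \<times> 'a \<times> (bool list \<Rightarrow> nat))) set" where
  "coend_gen X act n =
     {((m, act k m g x, f), (k, x, cdcomp n g f)) | m k g x f.
        g \<in> dhom m k \<and> x \<in> X k \<and> f \<in> chom n m}"

definition coend_rel ::
  "(nat \<Rightarrow> 'a set) \<Rightarrow> (nat \<Rightarrow> nat \<Rightarrow> (nat \<Rightarrow> nat) \<Rightarrow> 'a \<Rightarrow> 'a) \<Rightarrow> nat \<Rightarrow>
   ((nat \<times> 'a \<times> (bool list \<Rightarrow> nat)) \<times> (nat \<times> 'a \<times> (bool list \<Rightarrow> nat))) set" where
  "coend_rel X act n = Id_on (coend_carrier X n) \<union> (coend_gen X act n \<union> (coend_gen X act n)\<inverse>)\<^sup>+"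

definition Lobj ::
  "(nat \<Rightarrow> 'a set) \<Rightarrow> (nat \<Rightarrow> nat \<Rightarrow> (nat \<Rightarrow> nat) \<Rightarrow> 'a \<Rightarrow> 'a) \<Rightarrow> nat \<Rightarrow>
   (nat \<times> 'a \<times> (bool list \<Rightarrow> nat)) set set" where
  "Lobj X act n = coend_carrier X n // coend_rel X act n"

definition Lmap ::
  "(nat \<Rightarrow> 'b set) \<Rightarrow> (nat \<Rightarrow> nat \<Rightarrow> (nat \<Rightarrow> nat) \<Rightarrow> 'b \<Rightarrow> 'b) \<Rightarrow> (nat \<Rightarrow> 'a \<Rightarrow> 'b) \<Rightarrow> nat \<Rightarrow>
   (nat \<times> 'a \<times> (bool list \<Rightarrow> nat)) set \<Rightarrow> (nat \<times> 'b \<times> (bool list \<Rightarrow> nat)) set" where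
  "Lmap Y actY h n C = (\<Union>(m, x, f) \<in> C. coend_rel Y actY n `` {(m, h m x, f)})"

end

theory Submission
  imports Defs
begin

text \<open>
  An element \<open>(m, x, f)\<close> of the coend \<open>L(X)([1]^n)\<close>, with \<open>x\<close> an \<open>m\<close>-simplex and
  \<open>f : [1]^n \<rightarrow> [m]\<close>, has a normal form: factor \<open>f = e \<circ> u\<close> with \<open>u\<close> onto \<open>[k]\<close> and
  \<open>e\<close> injective, then write the face \<open>e\<^sup>* x\<close> as \<open>s\<^sup>* z\<close> with \<open>s\<close> a degeneracy and \<open>z\<close>
  nondegenerate (Eilenberg--Zilber); the normal form is \<open>(j, z, s \<circ> u)\<close>. Both factorizations
  are unique and the normal form does not change along the generating relation of the coend,
  so two elements are identified in the coend exactly when their normal forms agree.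
  A monomorphism \<open>h\<close> of simplicial sets sends nondegenerate simplices to nondegenerate ones,
  hence normal forms to normal forms, and it is injective on them; so \<open>L(h)\<close> is injective.
\<close>

section \<open>Monotone maps between finite ordinals\<close>

lemma strict_mono_on_atLeastAtMost_unique:
  fixes e e' :: "nat \<Rightarrow> 'b::linorder"
  assumes "strict_mono_on {0..a} e" "strict_mono_on {0..a'} e'" "e ` {0..a} = e' ` {0..a'}"
  shows "a = a'" and "\<forall>i\<le>a. e i = e' i"
proof -
  have sorted: "sorted_wrt (<) (map f [0..<Suc b])"
    if "strict_mono_on {0..b} f" for f :: "nat \<Rightarrow> 'b" and b
    using that by (auto simp: sorted_wrt_iff_nth_less simp del: upt_Suc intro: strict_mono_onD)
  have "set (map e' [0..<Suc a']) = set (map e [0..<Suc a])"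
    using assms(3) by (simp add: atLeastLessThanSuc_atLeastAtMost del: upt_Suc)
  then have eq: "map e' [0..<Suc a'] = map e [0..<Suc a]"
    using sorted assms(1,2) by (blast intro: strict_sorted_equal)
  from arg_cong[OF eq, of length] show "a = a'" by simp
  show "\<forall>i\<le>a. e i = e' i"
    using eq \<open>a = a'\<close> by (simp del: upt_Suc)
qed

lemma strict_mono_on_enumeration:
  fixes S :: "nat set"
  assumes "finite S" "S \<noteq> {}"
  obtains a :: nat and e where "strict_mono_on {0..a} e" "e ` {0..a} = S" "\<forall>i. a < i \<longrightarrow> e i = 0"
proof -
  let ?xs = "sorted_list_of_set S"
  define a where "a = card S - 1"
  define e where "e i = (if i \<le> a then ?xs ! i else 0)" for i
  have len: "length ?xs = Suc a" using assms by (simp add: a_def card_gt_0_iff)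
  have "strict_mono_on {0..a} e"
    by (rule strict_mono_onI) (use len in \<open>auto simp: e_def intro: sorted_wrt_nth_less\<close>)
  moreover have "e ` {0..a} = (!) ?xs ` {..<length ?xs}"
    using len by (auto simp: e_def image_iff less_Suc_eq_le)
  moreover have "(!) ?xs ` {..<length ?xs} = set ?xs"
    by (auto simp: in_set_conv_nth)
  ultimately show ?thesis using that[of a e] assms by (simp add: e_def)
qed

definition dsurj :: "nat \<Rightarrow> nat \<Rightarrow> (nat \<Rightarrow> nat) \<Rightarrow> bool" where
  "dsurj k j s \<longleftrightarrow> s \<in> dhom k j \<and> s ` {0..k} = {0..j}"

definition dinj :: "nat \<Rightarrow> nat \<Rightarrow> (nat \<Rightarrow> nat) \<Rightarrow> bool" where
  "dinj k m e \<longleftrightarrow> e \<in> dhom k m \<and> inj_on e {0..k}"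

definition csurj :: "nat \<Rightarrow> nat \<Rightarrow> (bool list \<Rightarrow> nat) \<Rightarrow> bool" where
  "csurj n k f \<longleftrightarrow> f \<in> chom n k \<and> f ` cube n = {0..k}"

lemma dhom_le: "f \<in> dhom k m \<Longrightarrow> i \<le> k \<Longrightarrow> f i \<le> m"
  and dhom_mono: "f \<in> dhom k m \<Longrightarrow> i \<le> i' \<Longrightarrow> i' \<le> k \<Longrightarrow> f i \<le> f i'"
  and dhom_zero: "f \<in> dhom k m \<Longrightarrow> k < i \<Longrightarrow> f i = 0"
  unfolding dhom_def by auto

lemma dhom_eqI:
  assumes "f \<in> dhom k m" "f' \<in> dhom k m'" "\<And>i. i \<le> k \<Longrightarrow> f i = f' i"
  shows "f = f'"
proof
  show "f i = f' i" for i
    using assms dhom_zero[of f k m i] dhom_zero[of f' k m' i] by (cases "i \<le> k") auto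
qed

lemma chom_le: "f \<in> chom n m \<Longrightarrow> xs \<in> cube n \<Longrightarrow> f xs \<le> m"
  and chom_mono: "f \<in> chom n m \<Longrightarrow> xs \<in> cube n \<Longrightarrow> ys \<in> cube n \<Longrightarrow> cube_le xs ys \<Longrightarrow> f xs \<le> f ys"
  and chom_zero: "f \<in> chom n m \<Longrightarrow> xs \<notin> cube n \<Longrightarrow> f xs = 0"
  unfolding chom_def by auto

lemma did_dsurj: "dsurj m m (did m)"
  by (auto simp: dsurj_def dhom_def did_def image_iff)

lemma dcomp_dhom: "f \<in> dhom k m \<Longrightarrow> g \<in> dhom m j \<Longrightarrow> dcomp k g f \<in> dhom k j"
  unfolding dhom_def dcomp_def by auto

lemma cdcomp_chom: "f \<in> chom n m \<Longrightarrow> g \<in> dhom m k \<Longrightarrow> cdcomp n g f \<in> chom n k"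
  unfolding chom_def dhom_def cdcomp_def by auto

lemma cdcomp_cdcomp: "f \<in> chom n k \<Longrightarrow> cdcomp n g (cdcomp n e f) = cdcomp n (dcomp k g e) f"
  unfolding cdcomp_def dcomp_def chom_def by auto

lemma dsurj_dhom: "dsurj k j s \<Longrightarrow> s \<in> dhom k j"
  and dinj_dhom: "dinj k m e \<Longrightarrow> e \<in> dhom k m"
  and csurj_chom: "csurj n k f \<Longrightarrow> f \<in> chom n k"
  by (simp_all add: dsurj_def dinj_def csurj_def)

lemma dsurj_dcomp:
  assumes "dsurj k j s" "dsurj j i t"
  shows "dsurj k i (dcomp k t s)"
proof -
  have "dcomp k t s ` {0..k} = t ` s ` {0..k}"
    by (auto simp: dcomp_def image_iff)
  with assms show ?thesis by (auto simp: dsurj_def intro: dcomp_dhom)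
qed

lemma csurj_cdcomp:
  assumes "csurj n k f" "dsurj k j s"
  shows "csurj n j (cdcomp n s f)"
proof -
  have "cdcomp n s f ` cube n = s ` f ` cube n"
    by (auto simp: cdcomp_def image_iff)
  with assms show ?thesis by (auto simp: csurj_def dsurj_def intro: cdcomp_chom)
qed

lemma dsurj_le: "dsurj k j s \<Longrightarrow> j \<le> k"
  using card_image_le[of "{0..k}" s] by (simp add: dsurj_def)

lemma inj_dhom_le:
  assumes "c \<in> dhom j k" "inj_on c {0..j}"
  shows "j \<le> k"
proof -
  have "c ` {0..j} \<subseteq> {0..k}" using dhom_le[OF assms(1)] by auto
  from card_inj_on_le[OF assms(2) this] show ?thesis by simp
qed

lemma dinj_strict_mono_on: "dinj k m e \<Longrightarrow> strict_mono_on {0..k} e"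
  by (rule mono_imp_strict_mono) (auto simp: dinj_def monotone_on_def dhom_mono)

lemma inj_dhom_endo_id:
  assumes "c \<in> dhom j j" "inj_on c {0..j}" "i \<le> j"
  shows "c i = i"
proof -
  have "c ` {0..j} \<subseteq> {0..j}" by (simp add: image_subset_iff dhom_le[OF assms(1)])
  from endo_inj_surj[OF finite_atLeastAtMost this assms(2)]
  have image: "c ` {0..j} = id ` {0..j}" by simp
  have "strict_mono_on {0..j} c"
    using assms by (intro dinj_strict_mono_on) (simp add: dinj_def)
  moreover have "strict_mono_on {0..j} id"
    by (simp add: strict_mono_on_def)
  ultimately have "\<forall>i\<le>j. c i = id i"
    by (rule strict_mono_on_atLeastAtMost_unique(2)[OF _ _ image])
  with assms(3) show ?thesis by simp
qed

lemma monotone_image_factorization: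
  fixes f :: "'x \<Rightarrow> nat"
  assumes "f ` A \<subseteq> {0..m}" "A \<noteq> {}"
  obtains a e u where "dinj a m e" "u ` A = {0..a}" "\<And>x. x \<in> A \<Longrightarrow> e (u x) = f x"
    "\<And>x y. x \<in> A \<Longrightarrow> y \<in> A \<Longrightarrow> f x \<le> f y \<Longrightarrow> u x \<le> u y"
proof -
  have "finite (f ` A)" "f ` A \<noteq> {}" using assms finite_subset by auto
  then obtain a :: nat and e
    where e: "strict_mono_on {0..a} e" "e ` {0..a} = f ` A" "\<forall>i. a < i \<longrightarrow> e i = 0"
    by (rule strict_mono_on_enumeration)
  have "e \<in> dhom a m"
    using e assms(1) by (fastforce simp: dhom_def intro: strict_mono_on_leD)
  then have "dinj a m e" using e(1) by (simp add: dinj_def strict_mono_on_imp_inj_on)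
  define u where "u x = inv_into {0..a} e (f x)" for x
  have u: "u x \<in> {0..a}" "e (u x) = f x" if "x \<in> A" for x
  proof -
    have "f x \<in> e ` {0..a}" using that e(2) by auto
    then show "u x \<in> {0..a}" "e (u x) = f x"
      unfolding u_def by (rule inv_into_into, rule f_inv_into_f)
  qed
  have "u ` A = inv_into {0..a} e ` e ` {0..a}"
    unfolding e(2) u_def by (simp add: image_image)
  also have "\<dots> = {0..a}"
    using e(1) by (simp add: inv_into_image_cancel strict_mono_on_imp_inj_on)
  finally have "u ` A = {0..a}" .
  moreover have "u x \<le> u y" if "x \<in> A" "y \<in> A" "f x \<le> f y" for x y
    using u[OF that(1)] u[OF that(2)] that(3) strict_mono_on_less_eq[OF e(1)] by metis
  ultimately show ?thesis using that \<open>dinj a m e\<close> u(2) by blast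
qed

lemma chom_factorization:
  assumes "f \<in> chom n m"
  obtains k e u where "csurj n k u" "dinj k m e" "f = cdcomp n e u"
proof -
  have "replicate n False \<in> cube n" by (simp add: cube_def)
  then have "f ` cube n \<subseteq> {0..m}" "cube n \<noteq> {}"
    using chom_le[OF assms] by auto
  from monotone_image_factorization[OF this] obtain k e u
    where eu: "dinj k m e" "u ` cube n = {0..k}" "\<And>xs. xs \<in> cube n \<Longrightarrow> e (u xs) = f xs"
    "\<And>xs ys. xs \<in> cube n \<Longrightarrow> ys \<in> cube n \<Longrightarrow> f xs \<le> f ys \<Longrightarrow> u xs \<le> u ys"
    by blast
  define u' where "u' xs = (if xs \<in> cube n then u xs else 0)" for xs
  have "u' \<in> chom n k"
    using eu(2,4) chom_mono[OF assms] by (auto simp: chom_def u'_def)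
  moreover have "u' ` cube n = {0..k}" using eu(2) by (simp add: u'_def)
  moreover have "f = cdcomp n e u'"
    using eu(3) chom_zero[OF assms] by (auto simp: cdcomp_def u'_def)
  ultimately show ?thesis using that eu(1) by (simp add: csurj_def)
qed

lemma dhom_factorization:
  assumes "f \<in> dhom j m"
  obtains k e u where "dsurj j k u" "dinj k m e" "f = dcomp j e u"
proof -
  have "f ` {0..j} \<subseteq> {0..m}" "{0..j} \<noteq> {}"
    using dhom_le[OF assms] by auto
  from monotone_image_factorization[OF this] obtain k e u
    where eu: "dinj k m e" "u ` {0..j} = {0..k}" "\<And>i. i \<in> {0..j} \<Longrightarrow> e (u i) = f i"
    "\<And>i i'. i \<in> {0..j} \<Longrightarrow> i' \<in> {0..j} \<Longrightarrow> f i \<le> f i' \<Longrightarrow> u i \<le> u i'"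
    by blast
  define u' where "u' i = (if i \<le> j then u i else 0)" for i
  have "u' \<in> dhom j k"
    using eu(2,4) dhom_mono[OF assms] by (auto simp: dhom_def u'_def)
  moreover have "u' ` {0..j} = {0..k}" using eu(2) by (simp add: u'_def)
  moreover have "f = dcomp j e u'"
    using eu(3) dhom_zero[OF assms] by (auto simp: dcomp_def u'_def)
  ultimately show ?thesis using that eu(1) by (simp add: dsurj_def)
qed

lemma chom_factorization_unique:
  assumes "csurj n k u" "dinj k m e" "csurj n k' u'" "dinj k' m e'"
    and eq: "cdcomp n e u = cdcomp n e' u'"
  shows "k = k'" and "e = e'" and "u = u'"
proof -
  have image: "cdcomp n g f ` cube n = g ` f ` cube n" for g f
    by (auto simp: cdcomp_def image_iff)
  have "e ` {0..k} = e' ` {0..k'}"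
    using image[of e u] image[of e' u'] assms(1,3) by (simp add: csurj_def eq)
  note same = strict_mono_on_atLeastAtMost_unique[OF
      dinj_strict_mono_on[OF assms(2)] dinj_strict_mono_on[OF assms(4)] this]
  show "k = k'" by (fact same(1))
  show "e = e'"
    using dhom_eqI[of e k m e' m] dinj_dhom[OF assms(2)] dinj_dhom[OF assms(4)] same by simp
  show "u = u'"
  proof
    fix xs
    show "u xs = u' xs"
    proof (cases "xs \<in> cube n")
      case True
      then have "e (u xs) = e (u' xs)"
        using fun_cong[OF eq, of xs] \<open>e = e'\<close> by (simp add: cdcomp_def)
      moreover have "u xs \<le> k" "u' xs \<le> k"
        using True assms(1,3) \<open>k = k'\<close> by (auto simp: csurj_def intro: chom_le)
      ultimately show ?thesis
        using assms(2) by (simp add: dinj_def inj_on_def)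
    next
      case False
      then show ?thesis using chom_zero csurj_chom assms(1,3) by metis
    qed
  qed
qed

lemma dsurj_section:
  assumes s: "dsurj k j s" and "i0 \<le> k"
  obtains d where "d \<in> dhom j k" "dcomp j s d = did j" "d (s i0) = i0"
proof -
  define d where
    "d i = (if i \<le> j then if i = s i0 then i0 else SOME l. l \<le> k \<and> s l = i else 0)" for i
  have d: "d i \<le> k \<and> s (d i) = i" if "i \<le> j" for i
  proof (cases "i = s i0")
    case False
    have "\<exists>l. l \<le> k \<and> s l = i" using s that by (force simp: dsurj_def)
    then have "(SOME l. l \<le> k \<and> s l = i) \<le> k \<and> s (SOME l. l \<le> k \<and> s l = i) = i"
      by (rule someI_ex)
    with that False show ?thesis by (simp add: d_def)
  qed (use that assms in \<open>simp add: d_def\<close>)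
  have mono: "d i \<le> d i'" if "i \<le> i'" "i' \<le> j" for i i'
  proof (rule ccontr)
    assume "\<not> d i \<le> d i'"
    then have "s (d i') \<le> s (d i)"
      using d[of i] that by (intro dhom_mono[OF dsurj_dhom[OF s]]) simp_all
    then have "i = i'" using d[of i] d[of i'] that by simp
    with \<open>\<not> d i \<le> d i'\<close> show False by simp
  qed
  have "d \<in> dhom j k"
    unfolding dhom_def using d mono by (simp add: d_def)
  moreover have "dcomp j s d = did j"
    using d by (auto simp: dcomp_def did_def)
  moreover have "d (s i0) = i0"
    using dhom_le[OF dsurj_dhom[OF s] assms(2)] by (simp add: d_def)
  ultimately show ?thesis by (rule that)
qed

section \<open>The Eilenberg--Zilber lemma\<close>

lemma sset_act_in: "sset X act \<Longrightarrow> f \<in> dhom k m \<Longrightarrow> x \<in> X m \<Longrightarrow> act m k f x \<in> X k"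
  and sset_act_did: "sset X act \<Longrightarrow> x \<in> X m \<Longrightarrow> act m m (did m) x = x"
  and sset_act_act: "sset X act \<Longrightarrow> f \<in> dhom k m \<Longrightarrow> g \<in> dhom j k \<Longrightarrow> x \<in> X m \<Longrightarrow>
    act k j g (act m k f x) = act m j (dcomp j f g) x"
  unfolding sset_def by blast+

lemma sset_act_section:
  assumes "sset X act" "s \<in> dhom k j" "d \<in> dhom j k" "dcomp j s d = did j" "x \<in> X j"
  shows "act k j d (act j k s x) = x"
  using assms sset_act_act[of X act s k j d j x] sset_act_did by metis

definition nondegenerate ::
  "(nat \<Rightarrow> 'a set) \<Rightarrow> (nat \<Rightarrow> nat \<Rightarrow> (nat \<Rightarrow> nat) \<Rightarrow> 'a \<Rightarrow> 'a) \<Rightarrow> nat \<Rightarrow> 'a \<Rightarrow> bool" where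
  "nondegenerate X act j z \<longleftrightarrow>
     z \<in> X j \<and> (\<forall>j' s w. dsurj j j' s \<longrightarrow> w \<in> X j' \<longrightarrow> act j' j s w = z \<longrightarrow> j' = j)"

lemma nondegenerate_in: "nondegenerate X act j z \<Longrightarrow> z \<in> X j"
  by (simp add: nondegenerate_def)

lemma eilenberg_zilber_exists:
  assumes X: "sset X act" and "x \<in> X k"
  obtains j s z where "dsurj k j s" "nondegenerate X act j z" "x = act j k s z"
  using assms(2)
proof (induction k arbitrary: x thesis rule: less_induct)
  case (less k)
  show ?case
  proof (cases "nondegenerate X act k x")
    case True
    then show ?thesis using less.prems did_dsurj sset_act_did[OF X] by metis
  next
    case False
    then obtain j' s w where sw: "dsurj k j' s" "w \<in> X j'" "x = act j' k s w" "j' \<noteq> k"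
      using less.prems unfolding nondegenerate_def by metis
    then have "j' < k" using dsurj_le[OF sw(1)] by simp
    with sw(2) obtain j t z where tz: "dsurj j' j t" "nondegenerate X act j z" "w = act j j' t z"
      using less.IH by metis
    have "x = act j k (dcomp k t s) z"
      using sw(3) tz(3) nondegenerate_in[OF tz(2)]
        sset_act_act[OF X dsurj_dhom[OF tz(1)] dsurj_dhom[OF sw(1)]] by simp
    with dsurj_dcomp[OF sw(1) tz(1)] tz(2) show ?thesis by (rule less.prems(1))
  qed
qed

lemma nondegenerate_restriction_inj:
  assumes X: "sset X act" and z: "nondegenerate X act j z" and "z' \<in> X j'"
    and c: "c \<in> dhom j j'" and eq: "z = act j' j c z'"
  shows "inj_on c {0..j}"
proof -
  obtain a e u where eu: "dsurj j a u" "dinj a j' e" "c = dcomp j e u"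
    using dhom_factorization[OF c] .
  have "act a j u (act j' a e z') = z"
    using sset_act_act[OF X dinj_dhom[OF eu(2)] dsurj_dhom[OF eu(1)] \<open>z' \<in> X j'\<close>] eu(3) eq by simp
  moreover have "act j' a e z' \<in> X a"
    using sset_act_in[OF X dinj_dhom[OF eu(2)] \<open>z' \<in> X j'\<close>] .
  ultimately have "a = j" using z eu(1) unfolding nondegenerate_def by blast
  then have "inj_on u {0..j}"
    using eu(1) by (intro eq_card_imp_inj_on) (simp_all add: dsurj_def)
  moreover have "inj_on e (u ` {0..j})"
    using eu(1,2) \<open>a = j\<close> by (simp add: dinj_def dsurj_def)
  ultimately have "inj_on (e \<circ> u) {0..j}" by (rule comp_inj_on)
  then show ?thesis
    by (rule inj_on_cong[THEN iffD1, rotated]) (simp add: eu(3) dcomp_def)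
qed

lemma degenerate_eq_section:
  assumes X: "sset X act" and s: "s \<in> dhom k j" and s': "s' \<in> dhom k j'"
    and "z \<in> X j" "z' \<in> X j'" and eq: "act j k s z = act j' k s' z'"
    and d: "d \<in> dhom j k" "dcomp j s d = did j"
  shows "z = act j' j (dcomp j s' d) z'"
proof -
  have "z = act k j d (act j k s z)"
    using sset_act_section[OF X s d \<open>z \<in> X j\<close>] by simp
  also have "\<dots> = act j' j (dcomp j s' d) z'"
    using eq sset_act_act[OF X s' d(1) \<open>z' \<in> X j'\<close>] by simp
  finally show ?thesis .
qed

lemma nondegenerate_degenerate_le:
  assumes X: "sset X act" and s: "dsurj k j s" and s': "s' \<in> dhom k j'"
    and z: "nondegenerate X act j z" and "z' \<in> X j'" and eq: "act j k s z = act j' k s' z'"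
  shows "j \<le> j'"
proof -
  obtain d where d: "d \<in> dhom j k" "dcomp j s d = did j"
    using dsurj_section[OF s le0[of k]] by blast
  have c: "dcomp j s' d \<in> dhom j j'" using dcomp_dhom[OF d(1) s'] .
  have "z = act j' j (dcomp j s' d) z'"
    using degenerate_eq_section[where act=act,
        OF X dsurj_dhom[OF s] s' nondegenerate_in[OF z] \<open>z' \<in> X j'\<close> eq d] .
  then have "inj_on (dcomp j s' d) {0..j}"
    by (rule nondegenerate_restriction_inj[OF X z \<open>z' \<in> X j'\<close> c])
  then show ?thesis by (rule inj_dhom_le[OF c])
qed

lemma eilenberg_zilber_unique:
  assumes X: "sset X act" and s: "dsurj k j s" and s': "dsurj k j' s'"
    and z: "nondegenerate X act j z" and z': "nondegenerate X act j' z'"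
    and eq: "act j k s z = act j' k s' z'"
  shows "j = j'" and "s = s'" and "z = z'"
proof -
  note in_X = nondegenerate_in[OF z] nondegenerate_in[OF z']
  show "j = j'"
    using nondegenerate_degenerate_le[where act=act, OF X s dsurj_dhom[OF s'] z in_X(2) eq]
      nondegenerate_degenerate_le[where act=act, OF X s' dsurj_dhom[OF s] z' in_X(1) eq[symmetric]]
    by simp
  have retract: "z = act j j (dcomp j s' d) z'" "\<forall>i\<le>j. dcomp j s' d i = i"
    if d: "d \<in> dhom j k" "dcomp j s d = did j" for d
  proof -
    have c: "dcomp j s' d \<in> dhom j j"
      using dcomp_dhom[OF d(1) dsurj_dhom[OF s']] \<open>j = j'\<close> by simp
    show "z = act j j (dcomp j s' d) z'"
      using degenerate_eq_section[where act=act, OF X dsurj_dhom[OF s] dsurj_dhom[OF s'] in_X eq d]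
        \<open>j = j'\<close> by simp
    then have "inj_on (dcomp j s' d) {0..j}"
      using nondegenerate_restriction_inj[OF X z] in_X(2) c \<open>j = j'\<close> by blast
    then show "\<forall>i\<le>j. dcomp j s' d i = i"
      using inj_dhom_endo_id[OF c] by blast
  qed
  show "s = s'"
  proof (rule dhom_eqI[OF dsurj_dhom[OF s] dsurj_dhom[OF s']])
    fix i assume "i \<le> k"
    then obtain d where d: "d \<in> dhom j k" "dcomp j s d = did j" "d (s i) = i"
      by (rule dsurj_section[OF s])
    have "s i \<le> j" using dhom_le[OF dsurj_dhom[OF s] \<open>i \<le> k\<close>] .
    with retract(2)[OF d(1,2)] have "dcomp j s' d (s i) = s i" by blast
    with \<open>s i \<le> j\<close> d(3) show "s i = s' i" by (simp add: dcomp_def)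
  qed
  obtain d where d: "d \<in> dhom j k" "dcomp j s d = did j"
    using dsurj_section[OF s le0[of k]] by blast
  have "z = act j j (did j) z'"
    using retract(1)[OF d] d(2) \<open>s = s'\<close> by simp
  then show "z = z'"
    using sset_act_did[OF X in_X(2)] \<open>j = j'\<close> by simp
qed

section \<open>Normal forms in the coend\<close>

lemma chom_factorization_postcomp:
  assumes u: "csurj n p u" and e: "dinj p m e" and g: "g \<in> dhom m k"
    and u': "csurj n k' u'" and e': "dinj k' k e'"
    and eq: "cdcomp n g (cdcomp n e u) = cdcomp n e' u'"
  obtains t where "dsurj p k' t" "dcomp p g e = dcomp p e' t" "u' = cdcomp n t u"
proof -
  obtain q e2 t where t: "dsurj p q t" "dinj q k e2" "dcomp p g e = dcomp p e2 t"
    using dhom_factorization[OF dcomp_dhom[OF dinj_dhom[OF e] g]] .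
  have "cdcomp n e2 (cdcomp n t u) = cdcomp n e' u'"
    using eq t(3) cdcomp_cdcomp[OF csurj_chom[OF u]] by metis
  note same = chom_factorization_unique[OF csurj_cdcomp[OF u t(1)] t(2) u' e' this]
  show ?thesis
    using that t same by metis
qed

lemma coend_genI:
  "g \<in> dhom m k \<Longrightarrow> x \<in> X k \<Longrightarrow> f \<in> chom n m \<Longrightarrow>
    ((m, act k m g x, f), (k, x, cdcomp n g f)) \<in> coend_gen X act n"
  unfolding coend_gen_def by blast

lemma coend_genE:
  assumes "(a, b) \<in> coend_gen X act n"
  obtains m k g x f where "a = (m, act k m g x, f)" "b = (k, x, cdcomp n g f)"
    "g \<in> dhom m k" "x \<in> X k" "f \<in> chom n m"
  using assms unfolding coend_gen_def by blast

lemma coend_gen_subset: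
  assumes "sset X act"
  shows "coend_gen X act n \<subseteq> coend_carrier X n \<times> coend_carrier X n"
proof
  fix p assume "p \<in> coend_gen X act n"
  then obtain a b where "(a, b) \<in> coend_gen X act n" "p = (a, b)" by (cases p) auto
  then show "p \<in> coend_carrier X n \<times> coend_carrier X n"
    by (elim coend_genE) (auto simp: coend_carrier_def sset_act_in[OF assms] cdcomp_chom)
qed

lemma equiv_coend_rel:
  assumes "sset X act"
  shows "equiv (coend_carrier X n) (coend_rel X act n)"
proof -
  let ?A = "coend_carrier X n" and ?G = "coend_gen X act n"
  have "?G \<union> ?G\<inverse> \<subseteq> ?A \<times> ?A" using coend_gen_subset[OF assms] by blast
  then have T: "(?G \<union> ?G\<inverse>)\<^sup>+ \<subseteq> ?A \<times> ?A" by (rule trancl_subset_Sigma)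
  have "coend_rel X act n \<subseteq> ?A \<times> ?A"
    using T by (auto simp: coend_rel_def)
  moreover have "refl_on ?A (coend_rel X act n)"
    by (auto simp: refl_on_def coend_rel_def)
  moreover have "sym (coend_rel X act n)"
    unfolding coend_rel_def by (intro sym_Un sym_Id_on sym_trancl sym_Un_converse)
  moreover have "trans (coend_rel X act n)"
    using T unfolding coend_rel_def trans_def by (blast intro: trancl_trans)
  ultimately show ?thesis by (rule equivI)
qed

definition coend_nf ::
  "(nat \<Rightarrow> 'a set) \<Rightarrow> (nat \<Rightarrow> nat \<Rightarrow> (nat \<Rightarrow> nat) \<Rightarrow> 'a \<Rightarrow> 'a) \<Rightarrow> nat \<Rightarrow>
   nat \<times> 'a \<times> (bool list \<Rightarrow> nat) \<Rightarrow> nat \<times> 'a \<times> (bool list \<Rightarrow> nat) \<Rightarrow> bool" where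
  "coend_nf X act n a b \<longleftrightarrow> (\<exists>m x f k e u j s z.
     a = (m, x, f) \<and> b = (j, z, cdcomp n s u) \<and> x \<in> X m \<and>
     csurj n k u \<and> dinj k m e \<and> f = cdcomp n e u \<and>
     dsurj k j s \<and> nondegenerate X act j z \<and> act m k e x = act j k s z)"

lemma coend_nfI:
  assumes "x \<in> X m" "csurj n k u" "dinj k m e" "f = cdcomp n e u"
    "dsurj k j s" "nondegenerate X act j z" "act m k e x = act j k s z"
  shows "coend_nf X act n (m, x, f) (j, z, cdcomp n s u)"
  using assms unfolding coend_nf_def by blast

lemma coend_nfE:
  assumes "coend_nf X act n a b"
  obtains m x f k e u j s z where "a = (m, x, f)" "b = (j, z, cdcomp n s u)" "x \<in> X m"
    "csurj n k u" "dinj k m e" "f = cdcomp n e u"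
    "dsurj k j s" "nondegenerate X act j z" "act m k e x = act j k s z"
  using assms unfolding coend_nf_def by blast

lemma coend_nf_exists:
  assumes X: "sset X act" and "a \<in> coend_carrier X n"
  obtains b where "coend_nf X act n a b"
proof -
  obtain m x f where a: "a = (m, x, f)" "x \<in> X m" "f \<in> chom n m"
    using assms(2) by (auto simp: coend_carrier_def)
  obtain k e u where eu: "csurj n k u" "dinj k m e" "f = cdcomp n e u"
    using chom_factorization[OF a(3)] .
  obtain j s z where sz: "dsurj k j s" "nondegenerate X act j z" "act m k e x = act j k s z"
    using eilenberg_zilber_exists[OF X sset_act_in[OF X dinj_dhom[OF eu(2)] a(2)]] .
  have "coend_nf X act n a (j, z, cdcomp n s u)"
    unfolding a(1) using a(2) eu sz by (rule coend_nfI[where act=act])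
  then show ?thesis by (rule that)
qed

lemma coend_nf_carrier:
  assumes "coend_nf X act n a b"
  shows "b \<in> coend_carrier X n"
proof -
  obtain k u j s z where b: "b = (j, z, cdcomp n s u)" "csurj n k u" "dsurj k j s"
    "nondegenerate X act j z"
    using assms by (elim coend_nfE) blast
  have "cdcomp n s u \<in> chom n j"
    using cdcomp_chom[OF csurj_chom[OF b(2)] dsurj_dhom[OF b(3)]] .
  then show ?thesis
    using b(1,4) by (simp add: coend_carrier_def nondegenerate_in)
qed

lemma coend_nf_unique:
  assumes X: "sset X act" and "coend_nf X act n a b" "coend_nf X act n a b'"
  shows "b = b'"
proof -
  obtain m x f k e u j s z where b: "a = (m, x, f)" "b = (j, z, cdcomp n s u)"
    "csurj n k u" "dinj k m e" "f = cdcomp n e u"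
    "dsurj k j s" "nondegenerate X act j z" "act m k e x = act j k s z"
    using assms(2) by (rule coend_nfE)
  obtain m' x' f' k' e' u' j' s' z' where b': "a = (m', x', f')" "b' = (j', z', cdcomp n s' u')"
    "csurj n k' u'" "dinj k' m' e'" "f' = cdcomp n e' u'"
    "dsurj k' j' s'" "nondegenerate X act j' z'" "act m' k' e' x' = act j' k' s' z'"
    using assms(3) by (rule coend_nfE)
  have "m' = m" "x' = x" "f' = f" using b(1) b'(1) by simp_all
  then have "k = k'" "e = e'" "u = u'"
    using chom_factorization_unique[OF b(3,4) b'(3)] b'(4) b(5) b'(5) by simp_all
  then have "act j k s z = act j' k s' z'"
    using b(8) b'(8) \<open>m' = m\<close> \<open>x' = x\<close> by simp
  note same = eilenberg_zilber_unique[where act=act, OF X b(6) _ b(7) b'(7) this]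
  show ?thesis
    using same b(2) b'(2) b'(6) \<open>k = k'\<close> \<open>u = u'\<close> by simp
qed

lemma coend_nf_rel:
  assumes X: "sset X act" and "coend_nf X act n a b"
  shows "(a, b) \<in> coend_rel X act n"
proof -
  obtain m x f k e u j s z where b: "a = (m, x, f)" "b = (j, z, cdcomp n s u)" "x \<in> X m"
    "csurj n k u" "dinj k m e" "f = cdcomp n e u"
    "dsurj k j s" "nondegenerate X act j z" "act m k e x = act j k s z"
    using assms(2) by (rule coend_nfE)
  have "((k, act m k e x, u), a) \<in> coend_gen X act n"
    using coend_genI[where X=X and act=act, OF dinj_dhom[OF b(5)] b(3) csurj_chom[OF b(4)]] b(1,6)
    by simp
  moreover have "((k, act m k e x, u), b) \<in> coend_gen X act n"
    using coend_genI[where X=X and act=act,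
        OF dsurj_dhom[OF b(7)] nondegenerate_in[OF b(8)] csurj_chom[OF b(4)]] b(2,9)
    by simp
  ultimately show ?thesis
    unfolding coend_rel_def by (blast intro: trancl_into_trancl2 r_into_trancl)
qed

lemma coend_nf_gen:
  assumes X: "sset X act" and "(a, a') \<in> coend_gen X act n" and "coend_nf X act n a' b"
  shows "coend_nf X act n a b"
proof -
  obtain m k g x f where a: "a = (m, act k m g x, f)" "a' = (k, x, cdcomp n g f)"
    "g \<in> dhom m k" "x \<in> X k" "f \<in> chom n m"
    using assms(2) by (rule coend_genE)
  obtain m' x' f' k' e' u' j s' z where b: "a' = (m', x', f')" "b = (j, z, cdcomp n s' u')"
    "csurj n k' u'" "dinj k' m' e'" "f' = cdcomp n e' u'"
    "dsurj k' j s'" "nondegenerate X act j z" "act m' k' e' x' = act j k' s' z"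
    using assms(3) by (rule coend_nfE)
  have a': "m' = k" "x' = x" "f' = cdcomp n g f" using a(2) b(1) by simp_all
  have e': "dinj k' k e'" using b(4) a'(1) by simp
  obtain p e u where eu: "csurj n p u" "dinj p m e" "f = cdcomp n e u"
    using chom_factorization[OF a(5)] .
  obtain t where t: "dsurj p k' t" "dcomp p g e = dcomp p e' t" "u' = cdcomp n t u"
    using chom_factorization_postcomp[OF eu(1,2) a(3) b(3) e'] b(5) eu(3) a' by metis
  have "act m p e (act k m g x) = act k p (dcomp p e' t) x"
    using sset_act_act[OF X a(3) dinj_dhom[OF eu(2)] a(4)] t(2) by simp
  also have "\<dots> = act k' p t (act j k' s' z)"
    using sset_act_act[OF X dinj_dhom[OF e'] dsurj_dhom[OF t(1)] a(4)] b(8) a' by simp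
  also have "\<dots> = act j p (dcomp p s' t) z"
    using sset_act_act[OF X dsurj_dhom[OF b(6)] dsurj_dhom[OF t(1)] nondegenerate_in[OF b(7)]] .
  finally have "act m p e (act k m g x) = act j p (dcomp p s' t) z" .
  moreover have "cdcomp n s' u' = cdcomp n (dcomp p s' t) u"
    using cdcomp_cdcomp[OF csurj_chom[OF eu(1)]] t(3) by simp
  ultimately show ?thesis
    using coend_nfI[where act=act, OF sset_act_in[OF X a(3,4)] eu dsurj_dcomp[OF t(1) b(6)] b(7)]
      a(1) b(2) by simp
qed

definition coend_NF ::
  "(nat \<Rightarrow> 'a set) \<Rightarrow> (nat \<Rightarrow> nat \<Rightarrow> (nat \<Rightarrow> nat) \<Rightarrow> 'a \<Rightarrow> 'a) \<Rightarrow> nat \<Rightarrow>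
   nat \<times> 'a \<times> (bool list \<Rightarrow> nat) \<Rightarrow> nat \<times> 'a \<times> (bool list \<Rightarrow> nat)" where
  "coend_NF X act n a = (THE b. coend_nf X act n a b)"

lemma coend_NF_eqI:
  assumes "sset X act" "coend_nf X act n a b"
  shows "coend_NF X act n a = b"
  unfolding coend_NF_def using assms coend_nf_unique[OF assms(1)] by blast

lemma coend_nf_NF:
  assumes "sset X act" "a \<in> coend_carrier X n"
  shows "coend_nf X act n a (coend_NF X act n a)"
  using coend_nf_exists[OF assms] coend_NF_eqI[OF assms(1)] by metis

lemma coend_NF_gen:
  assumes X: "sset X act" and "(a, a') \<in> coend_gen X act n"
  shows "coend_NF X act n a = coend_NF X act n a'"
proof -
  have "a' \<in> coend_carrier X n" using coend_gen_subset[OF X] assms(2) by blast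
  then show ?thesis
    using coend_NF_eqI[OF X coend_nf_gen[OF X assms(2) coend_nf_NF[OF X]]] by simp
qed

lemma coend_rel_iff_NF:
  assumes X: "sset X act" and "a \<in> coend_carrier X n" "a' \<in> coend_carrier X n"
  shows "(a, a') \<in> coend_rel X act n \<longleftrightarrow> coend_NF X act n a = coend_NF X act n a'"
proof
  let ?G = "coend_gen X act n"
  assume "(a, a') \<in> coend_rel X act n"
  then consider "a = a'" | "(a, a') \<in> (?G \<union> ?G\<inverse>)\<^sup>+"
    unfolding coend_rel_def by blast
  then show "coend_NF X act n a = coend_NF X act n a'"
  proof cases
    case 2
    then show ?thesis
      by (induction rule: trancl_induct) (auto dest: coend_NF_gen[OF X])
  qed simp
next
  assume "coend_NF X act n a = coend_NF X act n a'"
  then show "(a, a') \<in> coend_rel X act n"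
    using coend_nf_rel[OF X coend_nf_NF[OF X assms(2)]]
      coend_nf_rel[OF X coend_nf_NF[OF X assms(3)]] equiv_coend_rel[OF X]
    by (metis equivE symE transE)
qed

section \<open>Monomorphisms\<close>

lemma sset_homD:
  assumes "sset_hom X actX Y actY h"
  shows sset_hom_in: "x \<in> X m \<Longrightarrow> h m x \<in> Y m"
    and sset_hom_act: "f \<in> dhom k m \<Longrightarrow> x \<in> X m \<Longrightarrow> h k (actX m k f x) = actY m k f (h m x)"
  using assms unfolding sset_hom_def by blast+

lemma sset_mono_nondegenerate:
  assumes X: "sset X actX" and Y: "sset Y actY" and h: "sset_mono X actX Y actY h"
    and z: "nondegenerate X actX j z"
  shows "nondegenerate Y actY j (h j z)"
proof -
  have hom: "sset_hom X actX Y actY h" and inj: "inj_on (h j) (X j)"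
    using h by (simp_all add: sset_mono_def)
  have zX: "z \<in> X j" using z by (rule nondegenerate_in)
  have "j' = j" if s: "dsurj j j' s" and "w \<in> Y j'" and w: "actY j' j s w = h j z" for j' s w
  proof -
    obtain d where d: "d \<in> dhom j' j" "dcomp j' s d = did j'"
      using dsurj_section[OF s le0[of j]] by blast
    have dz: "actX j j' d z \<in> X j'" using sset_act_in[OF X d(1) zX] .
    have "w = h j' (actX j j' d z)"
      using sset_act_section[OF Y dsurj_dhom[OF s] d \<open>w \<in> Y j'\<close>] w sset_hom_act[OF hom d(1) zX]
      by simp
    then have "h j (actX j' j s (actX j j' d z)) = h j z"
      using w sset_hom_act[OF hom dsurj_dhom[OF s] dz] by simp
    then have "actX j' j s (actX j j' d z) = z"
      using inj zX sset_act_in[OF X dsurj_dhom[OF s] dz] by (simp add: inj_on_eq_iff)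
    then show "j' = j" using z s dz unfolding nondegenerate_def by blast
  qed
  then show ?thesis
    using sset_hom_in[OF hom zX] by (auto simp: nondegenerate_def)
qed

definition coend_map ::
  "(nat \<Rightarrow> 'a \<Rightarrow> 'b) \<Rightarrow> nat \<times> 'a \<times> (bool list \<Rightarrow> nat) \<Rightarrow> nat \<times> 'b \<times> (bool list \<Rightarrow> nat)" where
  "coend_map h = (\<lambda>(m, x, f). (m, h m x, f))"

lemma coend_map_simp [simp]: "coend_map h (m, x, f) = (m, h m x, f)"
  by (simp add: coend_map_def)

lemma Lmap_eq_UN: "Lmap Y actY h n C = (\<Union>p\<in>C. coend_rel Y actY n `` {coend_map h p})"
  unfolding Lmap_def coend_map_def by (simp add: split_beta)

lemma coend_map_carrier:
  "sset_hom X actX Y actY h \<Longrightarrow> a \<in> coend_carrier X n \<Longrightarrow> coend_map h a \<in> coend_carrier Y n"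
  by (auto simp: coend_carrier_def sset_hom_in)

lemma inj_on_coend_map:
  "(\<And>m. inj_on (h m) (X m)) \<Longrightarrow> inj_on (coend_map h) (coend_carrier X n)"
  by (auto simp: inj_on_def coend_carrier_def)

lemma coend_map_gen:
  assumes hom: "sset_hom X actX Y actY h" and "(a, b) \<in> coend_gen X actX n"
  shows "(coend_map h a, coend_map h b) \<in> coend_gen Y actY n"
proof -
  obtain m k g x f where a: "a = (m, actX k m g x, f)" "b = (k, x, cdcomp n g f)"
    "g \<in> dhom m k" "x \<in> X k" "f \<in> chom n m"
    using assms(2) by (rule coend_genE)
  show ?thesis
    using coend_genI[where X=Y and act=actY, OF a(3) sset_hom_in[OF hom a(4)] a(5)] a
      sset_hom_act[OF hom a(3,4)] by simp
qed

lemma coend_map_rel: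
  assumes Y: "sset Y actY" and hom: "sset_hom X actX Y actY h" and "(a, b) \<in> coend_rel X actX n"
  shows "(coend_map h a, coend_map h b) \<in> coend_rel Y actY n"
proof -
  let ?G = "coend_gen X actX n" and ?R = "coend_rel Y actY n"
  have step: "(coend_map h p, coend_map h q) \<in> ?R" if "(p, q) \<in> ?G \<union> ?G\<inverse>" for p q
    using that coend_map_gen[OF hom] unfolding coend_rel_def by blast
  consider "a = b" "a \<in> coend_carrier X n" | "(a, b) \<in> (?G \<union> ?G\<inverse>)\<^sup>+"
    using assms(3) unfolding coend_rel_def by blast
  then show ?thesis
  proof cases
    case 1
    then show ?thesis
      using coend_map_carrier[OF hom 1(2)] by (auto simp: coend_rel_def intro: Id_onI)
  next
    case 2
    then show ?thesis
      by (induction rule: trancl_induct)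
        (use step equiv_coend_rel[OF Y] in \<open>blast elim: equivE transE\<close>)+
  qed
qed

lemma coend_nf_map:
  assumes X: "sset X actX" and Y: "sset Y actY" and h: "sset_mono X actX Y actY h"
    and "coend_nf X actX n a b"
  shows "coend_nf Y actY n (coend_map h a) (coend_map h b)"
proof -
  have hom: "sset_hom X actX Y actY h" using h by (simp add: sset_mono_def)
  obtain m x f k e u j s z where b: "a = (m, x, f)" "b = (j, z, cdcomp n s u)" "x \<in> X m"
    "csurj n k u" "dinj k m e" "f = cdcomp n e u"
    "dsurj k j s" "nondegenerate X actX j z" "actX m k e x = actX j k s z"
    using assms(4) by (rule coend_nfE)
  have "actY m k e (h m x) = actY j k s (h j z)"
    using sset_hom_act[OF hom dinj_dhom[OF b(5)] b(3)] b(9)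
      sset_hom_act[OF hom dsurj_dhom[OF b(7)] nondegenerate_in[OF b(8)]] by simp
  with coend_nfI[where act=actY, OF sset_hom_in[OF hom b(3)] b(4-7)
      sset_mono_nondegenerate[OF X Y h b(8)]]
  show ?thesis using b(1,2) by simp
qed

lemma coend_NF_map:
  assumes X: "sset X actX" and Y: "sset Y actY" and h: "sset_mono X actX Y actY h"
    and "a \<in> coend_carrier X n"
  shows "coend_NF Y actY n (coend_map h a) = coend_map h (coend_NF X actX n a)"
  using coend_NF_eqI[OF Y coend_nf_map[OF X Y h coend_nf_NF[OF X assms(4)]]] .

lemma Lmap_class:
  assumes Y: "sset Y actY" and hom: "sset_hom X actX Y actY h" and a: "a \<in> coend_carrier X n"
  shows "Lmap Y actY h n (coend_rel X actX n `` {a}) = coend_rel Y actY n `` {coend_map h a}"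
proof -
  have "coend_rel Y actY n `` {coend_map h p} = coend_rel Y actY n `` {coend_map h a}"
    if "(a, p) \<in> coend_rel X actX n" for p
    using equiv_class_eq[OF equiv_coend_rel[OF Y] coend_map_rel[OF Y hom that]] by simp
  moreover have "a \<in> coend_rel X actX n `` {a}"
    using a by (auto simp: coend_rel_def intro: Id_onI)
  ultimately show ?thesis unfolding Lmap_eq_UN by blast
qed

theorem mainTheorem6:
  fixes X :: "nat \<Rightarrow> 'a set" and actX :: "nat \<Rightarrow> nat \<Rightarrow> (nat \<Rightarrow> nat) \<Rightarrow> 'a \<Rightarrow> 'a"
    and Y :: "nat \<Rightarrow> 'b set" and actY :: "nat \<Rightarrow> nat \<Rightarrow> (nat \<Rightarrow> nat) \<Rightarrow> 'b \<Rightarrow> 'b"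
    and h :: "nat \<Rightarrow> 'a \<Rightarrow> 'b"
  assumes "sset X actX" and "sset Y actY"
    and "sset_mono X actX Y actY h"
  shows "\<forall>n. inj_on (Lmap Y actY h n) (Lobj X actX n)"
proof (intro allI inj_onI)
  fix n C C'
  note X = assms(1) and Y = assms(2) and h = assms(3)
  have hom: "sset_hom X actX Y actY h" and inj: "\<And>m. inj_on (h m) (X m)"
    using h by (simp_all add: sset_mono_def)
  let ?RX = "coend_rel X actX n" and ?RY = "coend_rel Y actY n" and ?NF = "coend_NF X actX n"
  assume "C \<in> Lobj X actX n" "C' \<in> Lobj X actX n" and eq: "Lmap Y actY h n C = Lmap Y actY h n C'"
  then obtain a a' where a: "a \<in> coend_carrier X n" "C = ?RX `` {a}"
    and a': "a' \<in> coend_carrier X n" "C' = ?RX `` {a'}"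
    unfolding Lobj_def by (auto elim!: quotientE)
  have ha: "coend_map h a \<in> coend_carrier Y n" and ha': "coend_map h a' \<in> coend_carrier Y n"
    using coend_map_carrier[OF hom] a(1) a'(1) by blast+
  have "?RY `` {coend_map h a} = ?RY `` {coend_map h a'}"
    using eq unfolding a(2) a'(2) Lmap_class[OF Y hom a(1)] Lmap_class[OF Y hom a'(1)] .
  then have "(coend_map h a, coend_map h a') \<in> ?RY"
    using eq_equiv_class_iff[OF equiv_coend_rel[OF Y] ha ha'] by simp
  then have "coend_map h (?NF a) = coend_map h (?NF a')"
    using coend_rel_iff_NF[OF Y ha ha'] coend_NF_map[OF X Y h] a(1) a'(1) by simp
  with inj_on_coend_map[of h X n, OF inj] have "?NF a = ?NF a'"
    using coend_nf_carrier[OF coend_nf_NF[OF X a(1)]] coend_nf_carrier[OF coend_nf_NF[OF X a'(1)]]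
    by (rule inj_onD)
  then show "C = C'"
    using coend_rel_iff_NF[OF X a(1) a'(1)] eq_equiv_class_iff[OF equiv_coend_rel[OF X] a(1) a'(1)]
      a(2) a'(2) by simp
qed

end
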